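(* Let $\mathcal T$ be a graftable class of rooted trees satisfying $T(x)=x\Phi(T(x))$ for some power series $\Phi$ with $\Phi(0)\ne0$. For an integer $k\ge 1$ let $$D_k(x)=\sum_{T\in\mathcal T}\ \sum_{v\in T} d(v,r(T))^k\,x^{|T|}.$$ Then $D_k(x)=(V(x)-T(x))\,P_k\!\left(\frac{L(x)}{x}\right)$. Here $P_k$ is the polynomial defined in the context, and it has the form $$P_k(t)=k!\,t^k-\frac{k!\,(k-1)}{2}\,t^{k-1}+Q_k(t),$$ where $Q_k$ is a polynomial of degree at most $k-2$ if $k\ge2$ and $Q_1=0$.
   Context: All trees are rooted; $|T|$ is the number of vertices, $r(T)$ is the root, and $d(u,w)$ is the number of edges of the path between vertices $u$ and $w$. A leaf is a vertex with no children. A class $\mathcal T$ of (unlabelled) rooted trees, possibly carrying extra structure such as an ordering of children or a left/right designation of children, is graftable if the following hold. First, for every $T\in\mathcal T$ and every vertex $v$, both the subtree rooted at $v$ and the tree obtained from $T$ by deleting all proper descendants of $v$ lie in $\mathcal T$, and in the latter tree $v$ is a leaf. Second, identifying any leaf of any $S\in\mathcal T$ with the root of any $U\in\mathcal T$ gives a tree in $\mathcal T$. The generating functions are $T(x)=\sum_{T\in\mathcal T}x^{|T|}$, $V(x)=\sum_{T\in\mathcal T}|T|x^{|T|}$ and $L(x)=\sum_{T\in\mathcal T}(\#\text{leaves of }T)x^{|T|}$. Definition of $P_k$: write $\binom{m+k-1}{k}=\sum_{j=0}^{k}b_{k,j}m^j$ as a polynomial in $m$, so that $b_{k,0}=0$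 for $k\ge1$. Define polynomials $P_1,P_2,\dots$ recursively by the identity $t^k=\sum_{j=1}^k b_{k,j}P_j(t)$ for all $k\ge1$. In particular $P_1(t)=t$ and $P_2(t)=2t^2-t$. *)

theory Defs
  imports "HOL-Computational_Algebra.Computational_Algebra"
begin

text \<open>Rooted trees with extra structure: each vertex has an ordered list of children,
  and each child edge carries a label of type 'a (e.g. left/right designation).\<close>

datatype 'a tree = Node "('a \<times> 'a tree) list"

text \<open>Multiset (as a list) of depths d(v, r(T)) of all vertices v of T.\<close>
primrec depths :: "'a tree \<Rightarrow> nat list" where
  "depths (Node cs) = 0 # concat (map (\<lambda>p. map Suc (snd p)) (map (map_prod id depths) cs))"

definition tsize :: "'a tree \<Rightarrow> nat" where
  "tsize T = length (depths T)"

primrec nleaves :: "'a tree \<Rightarrow> nat" where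
  "nleaves (Node cs) = (if cs = [] then 1 else sum_list (map snd (map (map_prod id nleaves) cs)))"

inductive is_subtree :: "'a tree \<Rightarrow> 'a tree \<Rightarrow> bool" where
  self: "is_subtree T T"
| child: "(a, c) \<in> set cs \<Longrightarrow> is_subtree S c \<Longrightarrow> is_subtree S (Node cs)"

inductive pruned :: "'a tree \<Rightarrow> 'a tree \<Rightarrow> bool" where
  here: "pruned (Node cs) (Node [])"
| down: "i < length cs \<Longrightarrow> cs ! i = (a, c) \<Longrightarrow> pruned c c' \<Longrightarrow>
           pruned (Node cs) (Node (cs[i := (a, c')]))"

inductive grafted :: "'a tree \<Rightarrow> 'a tree \<Rightarrow> 'a tree \<Rightarrow> bool" where
  leaf: "grafted (Node []) U U"
| down: "i < length cs \<Longrightarrow> cs ! i = (a, c) \<Longrightarrow> grafted c U c' \<Longrightarrow>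
           grafted (Node cs) U (Node (cs[i := (a, c')]))"

definition graftable :: "'a tree set \<Rightarrow> bool" where
  "graftable \<T> \<longleftrightarrow>
     (\<forall>T\<in>\<T>. \<forall>S. is_subtree S T \<longrightarrow> S \<in> \<T>) \<and>
     (\<forall>T\<in>\<T>. \<forall>T'. pruned T T' \<longrightarrow> T' \<in> \<T>) \<and>
     (\<forall>S\<in>\<T>. \<forall>U\<in>\<T>. \<forall>R. grafted S U R \<longrightarrow> R \<in> \<T>)"

definition tree_gf :: "'a tree set \<Rightarrow> ('a tree \<Rightarrow> real) \<Rightarrow> real fps" where
  "tree_gf \<T> w = Abs_fps (\<lambda>n. \<Sum>T\<in>{T\<in>\<T>. tsize T = n}. w T)"

text \<open>binom(m+k-1,k) as a polynomial in m; b k j is its j-th coefficient.\<close>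
definition binpoly :: "nat \<Rightarrow> real poly" where
  "binpoly k = smult (1 / fact k) (\<Prod>i<k. [:of_nat i, 1:])"

definition bcoef :: "nat \<Rightarrow> nat \<Rightarrow> real" where
  "bcoef k j = coeff (binpoly k) j"

text \<open>P_k determined recursively by t^k = sum_{j=1}^k b_{k,j} P_j(t) (note b_{k,k} = 1/k!).\<close>
function Ppoly :: "nat \<Rightarrow> real poly" where
  "Ppoly k = (if k = 0 then 0 else
     smult (1 / bcoef k k) (monom 1 k - (\<Sum>j\<in>{1..<k}. smult (bcoef k j) (Ppoly j))))"
  by auto
termination
  by (relation "measure id") auto

end

theory Submission
  imports Defs
begin

text \<open>
  Cutting a tree at the depth-\<open>d\<close> ancestor of a marked vertex is, by graftability, a bijection
  between pairs (tree with a marked leaf at depth \<open>d\<close>, tree with a marked vertex) and trees with a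
  marked vertex of depth at least \<open>d\<close>, the sizes adding up to one more. Writing \<open>A\<^sub>d\<close>, \<open>B\<^sub>d\<close> for
  the series counting vertices, resp. leaves, at depth \<open>d\<close>, this gives \<open>x A\<^sub>d = B\<^sub>d T\<close> and
  \<open>x B\<^sub>d\<^sub>+\<^sub>e = B\<^sub>d B\<^sub>e\<close>; since \<open>B\<^sub>0 = x\<close>, we get \<open>B\<^sub>d = x u\<^sup>d\<close> and \<open>A\<^sub>d = T u\<^sup>d\<close> with \<open>u = B\<^sub>1 / x\<close>.
  Hence \<open>\<Sum>\<^sub>T \<Sum>\<^sub>v f(d(v, r)) x\<^sup>|\<^sup>T\<^sup>| = T \<cdot> \<Sum>\<^sub>d f(d) u\<^sup>d\<close>; in particular \<open>V = T W\<close> and \<open>L = x W\<close> for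
  \<open>W = 1 / (1 - u)\<close>. Finally the negative binomial series \<open>\<Sum>\<^sub>d binom(d + k - 1, k) u\<^sup>d = u W\<^sup>k\<^sup>+\<^sup>1 = (W - 1) W\<^sup>k\<close>,
  expanded with \<open>binom(m + k - 1, k) = \<Sum>\<^sub>j b\<^sub>k\<^sub>,\<^sub>j m\<^sup>j\<close>, gives \<open>\<Sum>\<^sub>d d\<^sup>k u\<^sup>d = (W - 1) P\<^sub>k(W)\<close> by induction on \<open>k\<close>.
\<close>

section \<open>Positions and grafting\<close>

fun subtree_at :: "'a tree \<Rightarrow> nat list \<Rightarrow> 'a tree option" where
  "subtree_at T [] = Some T"
| "subtree_at (Node cs) (i # p) = (if i < length cs then subtree_at (snd (cs ! i)) p else None)"

fun graft_at :: "'a tree \<Rightarrow> nat list \<Rightarrow> 'a tree \<Rightarrow> 'a tree" where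
  "graft_at T [] U = U"
| "graft_at (Node cs) (i # p) U = (if i < length cs then
      Node (cs[i := (fst (cs ! i), graft_at (snd (cs ! i)) p U)]) else Node cs)"

definition positions :: "'a tree \<Rightarrow> nat list set" where
  "positions T = {p. subtree_at T p \<noteq> None}"

lemma tsize_Node: "tsize (Node cs) = Suc (sum_list (map (\<lambda>x. tsize (snd x)) cs))"
  by (simp add: tsize_def length_concat comp_def)

lemma tsize_leaf: "tsize (Node []) = 1"
  by (simp add: tsize_def)

lemma tsize_pos: "0 < tsize T"
  by (cases T) (simp add: tsize_def)

lemma subtree_at_append:
  "subtree_at T (p @ q) = Option.bind (subtree_at T p) (\<lambda>V. subtree_at V q)"
  by (induction T p rule: subtree_at.induct) auto

lemma subtree_at_graft_at: "subtree_at T p \<noteq> None \<Longrightarrow> subtree_at (graft_at T p U) p = Some U"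
  by (induction T p U rule: graft_at.induct) (auto split: if_splits)

lemma graft_at_graft_at: "subtree_at T p \<noteq> None \<Longrightarrow> graft_at (graft_at T p U) p W = graft_at T p W"
  by (induction T p U rule: graft_at.induct) (auto split: if_splits)

lemma graft_at_subtree_at: "subtree_at T p = Some V \<Longrightarrow> graft_at T p V = T"
  by (induction T p V rule: graft_at.induct) (auto split: if_splits)

lemma subtree_at_take_drop:
  assumes "r \<in> positions R"
  obtains V where "subtree_at R (take d r) = Some V" and "drop d r \<in> positions V"
proof -
  have "Option.bind (subtree_at R (take d r)) (\<lambda>V. subtree_at V (drop d r)) \<noteq> None"
    using assms unfolding positions_def subtree_at_append[symmetric] by simp
  then show ?thesis
    using that by (cases "subtree_at R (take d r)") (auto simp: positions_def)
qed

lemma tsize_graft_at: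
  "subtree_at T p = Some V \<Longrightarrow> tsize (graft_at T p U) + tsize V = tsize T + tsize U"
proof (induction T p U rule: graft_at.induct)
  case (2 cs i p U)
  then have i: "i < length cs" and V: "subtree_at (snd (cs ! i)) p = Some V"
    by (auto split: if_splits)
  let ?f = "\<lambda>x. tsize (snd x)" and ?c = "(fst (cs ! i), graft_at (snd (cs ! i)) p U)"
  have "?f (cs ! i) \<le> sum_list (map ?f cs)"
    using i by (intro member_le_sum_list) auto
  then have "sum_list (map ?f (cs[i := ?c])) + ?f (cs ! i) = sum_list (map ?f cs) + ?f ?c"
    using i by (simp add: map_update sum_list_update)
  then show ?case
    using "2.IH"[OF i V] i by (simp add: tsize_Node)
qed simp

lemma length_le_tsize_subtree_at: "subtree_at T p = Some V \<Longrightarrow> length p + tsize V \<le> tsize T"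
proof (induction T p rule: subtree_at.induct)
  case (2 cs i p)
  then have i: "i < length cs" and V: "subtree_at (snd (cs ! i)) p = Some V"
    by (auto split: if_splits)
  have "tsize (snd (cs ! i)) \<le> sum_list (map (\<lambda>x. tsize (snd x)) cs)"
    using i by (intro member_le_sum_list) auto
  then show ?case
    using "2.IH"[OF i V] by (simp add: tsize_Node)
qed simp

lemma length_less_tsize: "p \<in> positions T \<Longrightarrow> length p < tsize T"
proof -
  assume "p \<in> positions T"
  then obtain V where "subtree_at T p = Some V"
    by (auto simp: positions_def)
  from length_le_tsize_subtree_at[OF this] tsize_pos[of V] show ?thesis
    by linarith
qed

lemma grafted_graft_at: "subtree_at S p = Some (Node []) \<Longrightarrow> grafted S U (graft_at S p U)"
proof (induction S p U rule: graft_at.induct)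
  case (2 cs i p U)
  then show ?case
    using grafted.down[of i cs "fst (cs ! i)" "snd (cs ! i)"] by (auto split: if_splits)
qed (simp add: grafted.leaf)

lemma pruned_graft_at: "subtree_at S p \<noteq> None \<Longrightarrow> pruned S (graft_at S p (Node []))"
proof (induction S p "Node [] :: 'a tree" rule: graft_at.induct)
  case (1 T)
  then show ?case by (cases T) (simp add: pruned.here)
next
  case (2 cs i p)
  then show ?case
    using pruned.down[of i cs "fst (cs ! i)" "snd (cs ! i)"] by (auto split: if_splits)
qed

lemma is_subtree_subtree_at: "subtree_at S p = Some V \<Longrightarrow> is_subtree V S"
proof (induction S p rule: subtree_at.induct)
  case (2 cs i p)
  then have "(fst (cs ! i), snd (cs ! i)) \<in> set cs"
    by (simp split: if_splits)
  with 2 show ?case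
    by (metis is_subtree.child option.distinct(1) subtree_at.simps(2))
qed (simp add: is_subtree.self)

lemma positions_Node:
  "positions (Node cs) = insert [] (\<Union>i<length cs. (Cons i) ` positions (snd (cs ! i)))"
proof (rule set_eqI)
  show "p \<in> positions (Node cs) \<longleftrightarrow> p \<in> insert [] (\<Union>i<length cs. (Cons i) ` positions (snd (cs ! i)))"
    for p by (cases p) (auto simp: positions_def)
qed

lemma sum_UN_Cons_image:
  fixes n :: nat
  assumes "\<And>i. i < n \<Longrightarrow> finite (A i)"
  shows "(\<Sum>p\<in>(\<Union>i<n. (Cons i) ` A i). f p) = (\<Sum>i<n. \<Sum>p\<in>A i. f (i # p))"
proof -
  have "(\<Sum>p\<in>(\<Union>i<n. (Cons i) ` A i). f p) = (\<Sum>i<n. \<Sum>p\<in>(Cons i) ` A i. f p)"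
    by (rule sum.UNION_disjoint) (auto simp: assms)
  then show ?thesis
    by (simp add: sum.reindex)
qed

lemma sum_list_concat: "sum_list (concat xss) = sum_list (map sum_list xss)"
  by (induction xss) auto

lemma snd_in_snds: "snd x \<in> Basic_BNFs.snds x"
  by (cases x) simp

lemma finite_positions: "finite (positions T)"
proof (induction T)
  case (Node cs)
  then have "finite (positions (snd (cs ! i)))" if "i < length cs" for i
    using nth_mem[OF that] snd_in_snds by blast
  then show ?case
    by (simp add: positions_Node)
qed

lemma sum_list_map_depths:
  "sum_list (map f (depths T)) = (\<Sum>p\<in>positions T. (f (length p) :: 'b::comm_monoid_add))"
proof (induction T arbitrary: f)
  case (Node cs)
  let ?P = "\<lambda>i. positions (snd (cs ! i))"
  have IH: "sum_list (map g (depths (snd (cs ! i)))) = (\<Sum>p\<in>?P i. g (length p))"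
    if "i < length cs" for i and g :: "nat \<Rightarrow> 'b"
    using Node.IH[OF nth_mem[OF that] snd_in_snds] .
  have "(\<Sum>p\<in>positions (Node cs). f (length p))
      = f 0 + (\<Sum>i<length cs. \<Sum>p\<in>?P i. f (Suc (length p)))"
    unfolding positions_Node
    by (subst sum.insert) (auto simp: finite_positions sum_UN_Cons_image)
  also have "\<dots> = f 0 + (\<Sum>i<length cs. sum_list (map (\<lambda>d. f (Suc d)) (depths (snd (cs ! i)))))"
    by (simp add: IH)
  also have "\<dots> = f 0 + sum_list (map (\<lambda>x. sum_list (map (\<lambda>d. f (Suc d)) (depths (snd x)))) cs)"
    by (simp add: sum_list_sum_nth atLeast0LessThan)
  finally show ?case
    by (simp add: map_concat sum_list_concat comp_def)
qed

lemma tsize_eq_card_positions: "tsize T = card (positions T)"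
  using sum_list_map_depths[of "\<lambda>_. 1 :: nat" T] by (simp add: tsize_def sum_list_triv)

lemma nleaves_eq_card: "nleaves T = card {p\<in>positions T. subtree_at T p = Some (Node [])}"
proof (induction T)
  case (Node cs)
  let ?L = "\<lambda>T. {p\<in>positions T. subtree_at T p = Some (Node [])}"
  have IH: "nleaves (snd (cs ! i)) = card (?L (snd (cs ! i)))" if "i < length cs" for i
    using Node.IH[OF nth_mem[OF that] snd_in_snds] .
  have fin: "finite (?L T)" for T :: "'a tree"
    by (rule finite_subset[OF _ finite_positions]) auto
  show ?case
  proof (cases "cs = []")
    case True
    then have "?L (Node cs) = {[]}"
      by (auto simp: positions_def elim: subtree_at.elims)
    with True show ?thesis
      by simp
  next
    case False
    have "?L (Node cs) = (\<Union>i<length cs. (Cons i) ` ?L (snd (cs ! i)))"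
    proof (rule set_eqI)
      show "p \<in> ?L (Node cs) \<longleftrightarrow> p \<in> (\<Union>i<length cs. (Cons i) ` ?L (snd (cs ! i)))" for p
        using False by (cases p) (auto simp: positions_def)
    qed
    then have "card (?L (Node cs)) = (\<Sum>i<length cs. card (?L (snd (cs ! i))))"
      using sum_UN_Cons_image[of "length cs" "\<lambda>i. ?L (snd (cs ! i))" "\<lambda>_. 1::nat"] fin
      by simp
    also have "\<dots> = (\<Sum>i<length cs. nleaves (snd (cs ! i)))"
      by (simp add: IH)
    finally show ?thesis
      using False by (simp add: sum_list_sum_nth atLeast0LessThan)
  qed
qed

section \<open>The grafting bijection\<close>

lemma graftableD:
  assumes "graftable \<T>"
  shows "T \<in> \<T> \<Longrightarrow> is_subtree S T \<Longrightarrow> S \<in> \<T>"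
    and "T \<in> \<T> \<Longrightarrow> pruned T T' \<Longrightarrow> T' \<in> \<T>"
    and "S \<in> \<T> \<Longrightarrow> U \<in> \<T> \<Longrightarrow> grafted S U R \<Longrightarrow> R \<in> \<T>"
  using assms unfolding graftable_def by blast+

lemma leaf_in_graftable:
  assumes "graftable \<T>" and "\<T> \<noteq> {}"
  shows "Node [] \<in> \<T>"
proof -
  obtain cs where "Node cs \<in> \<T>"
    using assms(2) by (metis ex_in_conv tree.exhaust)
  then show ?thesis
    using graftableD(2)[OF assms(1)] pruned.here by blast
qed

lemma graft_at_in_class:
  assumes "graftable \<T>" and "S \<in> \<T>" and "U \<in> \<T>" and "subtree_at S p = Some (Node [])"
  shows "graft_at S p U \<in> \<T>" and "Suc (tsize (graft_at S p U)) = tsize S + tsize U"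
  using graftableD(3)[OF assms(1-3) grafted_graft_at[OF assms(4)]] tsize_graft_at[OF assms(4), of U]
  by (simp_all add: tsize_leaf)

lemma cut_at_in_class:
  assumes "graftable \<T>" and "R \<in> \<T>" and "subtree_at R p = Some V"
  shows "graft_at R p (Node []) \<in> \<T>" and "V \<in> \<T>"
    and "tsize (graft_at R p (Node [])) + tsize V = Suc (tsize R)"
  using graftableD(2)[OF assms(1,2) pruned_graft_at] graftableD(1)[OF assms(1,2) is_subtree_subtree_at]
    tsize_graft_at[OF assms(3), of "Node []"] assms(3)
  by (simp_all add: tsize_leaf)

lemma graft_at_bij_betw:
  assumes "graftable \<T>"
  shows "bij_betw (\<lambda>((S, p), (U, q)). (graft_at S p U, p @ q))
    {((S, p), (U, q)). S \<in> \<T> \<and> U \<in> \<T> \<and> tsize S + tsize U = Suc m \<and> length p = d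
        \<and> subtree_at S p = Some (Node []) \<and> q \<in> positions U \<and> P U q}
    {(R, r). R \<in> \<T> \<and> tsize R = m \<and> r \<in> positions R \<and> d \<le> length r
        \<and> P (the (subtree_at R (take d r))) (drop d r)}"
  apply (rule bij_betw_byWitness[where f' = "\<lambda>(R, r). ((graft_at R (take d r) (Node []), take d r),
                                             (the (subtree_at R (take d r)), drop d r))"])
  subgoal
    by (auto simp: graft_at_graft_at graft_at_subtree_at subtree_at_graft_at)
  subgoal
    apply clarify
    subgoal for R r
      by (rule subtree_at_take_drop[of r R d]) (auto simp: graft_at_graft_at graft_at_subtree_at)
    done
  subgoal
    apply clarify
    subgoal for _ _ S p U q
      using graft_at_in_class[OF assms, of S U p] subtree_at_graft_at[of S p U]
      by (auto simp: positions_def subtree_at_append)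
    done
  subgoal
    apply clarify
    subgoal for _ _ _ _ R r
      by (rule subtree_at_take_drop[of r R d])
        (use cut_at_in_class[OF assms, of R "take d r"] in \<open>auto simp: subtree_at_graft_at\<close>)
    done
  done

section \<open>Generating functions of marked trees\<close>

lemma tree_gf_nth_0: "tree_gf \<T> w $ 0 = 0"
proof -
  have no_trees: "{T\<in>\<T>. tsize T = 0} = {}"
    using tsize_pos by (metis (mono_tags) empty_Collect_eq less_irrefl)
  show ?thesis
    unfolding tree_gf_def fps_nth_Abs_fps no_trees by simp
qed

text \<open>The functional equation of the theorem is needed only to exclude the empty class,
  for which \<open>T(x) = 0 \<noteq> x \<Phi>(0)\<close>.\<close>
lemma nonempty_if_tree_gf_fixed_point:
  assumes "\<Phi> $ 0 \<noteq> 0" and "tree_gf \<T> (\<lambda>_. 1) = fps_X * fps_compose \<Phi> (tree_gf \<T> (\<lambda>_. 1))"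
  shows "\<T> \<noteq> {}"
proof
  assume "\<T> = {}"
  then have "tree_gf \<T> (\<lambda>_. 1) = 0"
    by (simp add: tree_gf_def fps_zero_def)
  then have "(fps_X * fps_compose \<Phi> 0) $ 1 = 0"
    using assms(2) by simp
  then show False
    using assms(1) by simp
qed

lemma tree_gf_card_nth:
  assumes "\<And>n. finite {T\<in>\<T>. tsize T = n}" and "\<And>T. finite (M T)"
  shows "tree_gf \<T> (\<lambda>T. real (card (M T))) $ n = real (card (SIGMA T:{T\<in>\<T>. tsize T = n}. M T))"
  using assms by (simp add: tree_gf_def)

lemma tree_gf_mult_card_nth:
  assumes fin: "\<And>n. finite {T\<in>\<T>. tsize T = n}"
    and "\<And>T. finite (M1 T)" and "\<And>T. finite (M2 T)"
  shows "(tree_gf \<T> (\<lambda>T. real (card (M1 T))) * tree_gf \<T> (\<lambda>T. real (card (M2 T)))) $ n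
     = real (card {(x, y). x \<in> Sigma \<T> M1 \<and> y \<in> Sigma \<T> M2 \<and> tsize (fst x) + tsize (fst y) = n})"
proof -
  define A where "A i = (SIGMA T:{T\<in>\<T>. tsize T = i}. M1 T)" for i
  define B where "B i = (SIGMA T:{T\<in>\<T>. tsize T = i}. M2 T)" for i
  have "finite (A i)" "finite (B i)" for i
    unfolding A_def B_def using assms by auto
  then have "(\<Sum>i=0..n. card (A i) * card (B (n - i))) = card (\<Union>i\<in>{0..n}. A i \<times> B (n - i))"
    by (subst card_UN_disjoint) (auto simp: A_def B_def card_cartesian_product)
  also have "(\<Union>i\<in>{0..n}. A i \<times> B (n - i))
      = {(x, y). x \<in> Sigma \<T> M1 \<and> y \<in> Sigma \<T> M2 \<and> tsize (fst x) + tsize (fst y) = n}"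
    by (auto simp: A_def B_def)
  finally show ?thesis
    using tree_gf_card_nth[OF fin, of M1] tree_gf_card_nth[OF fin, of M2] assms(2,3)
    by (simp add: fps_mult_nth A_def B_def flip: of_nat_mult of_nat_sum)
qed

lemma tree_gf_graft_convolution:
  assumes "graftable \<T>" and fin: "\<And>n. finite {T\<in>\<T>. tsize T = n}"
  shows "fps_X * tree_gf \<T> (\<lambda>R. real (card {r\<in>positions R. d \<le> length r
                                        \<and> P (the (subtree_at R (take d r))) (drop d r)}))
   = tree_gf \<T> (\<lambda>S. real (card {p\<in>positions S. length p = d \<and> subtree_at S p = Some (Node [])}))
     * tree_gf \<T> (\<lambda>U. real (card {q\<in>positions U. P U q}))"
    (is "fps_X * tree_gf \<T> (\<lambda>R. real (card (?C R))) = tree_gf \<T> (\<lambda>S. real (card (?L S))) * ?G")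
proof (rule fps_ext)
  fix n
  have fin_pos: "finite {p\<in>positions T. Q p}" for T :: "'a tree" and Q
    by (rule finite_subset[OF _ finite_positions]) auto
  show "(fps_X * tree_gf \<T> (\<lambda>R. real (card (?C R)))) $ n = (tree_gf \<T> (\<lambda>S. real (card (?L S))) * ?G) $ n"
  proof (cases n)
    case 0
    then show ?thesis
      by (simp add: fps_mult_nth tree_gf_nth_0)
  next
    case (Suc m)
    have "(SIGMA R:{R\<in>\<T>. tsize R = m}. ?C R)
      = {(R, r). R \<in> \<T> \<and> tsize R = m \<and> r \<in> positions R \<and> d \<le> length r
                 \<and> P (the (subtree_at R (take d r))) (drop d r)}"
      by auto
    also have "card \<dots> = card {((S, p), (U, q)). S \<in> \<T> \<and> U \<in> \<T> \<and> tsize S + tsize U = Suc m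
        \<and> length p = d \<and> subtree_at S p = Some (Node []) \<and> q \<in> positions U \<and> P U q}"
      using bij_betw_same_card[OF graft_at_bij_betw[OF assms(1)]] by simp
    also have "{((S, p), (U, q)). S \<in> \<T> \<and> U \<in> \<T> \<and> tsize S + tsize U = Suc m
        \<and> length p = d \<and> subtree_at S p = Some (Node []) \<and> q \<in> positions U \<and> P U q}
      = {(x, y). x \<in> Sigma \<T> ?L \<and> y \<in> Sigma \<T> (\<lambda>U. {q\<in>positions U. P U q})
                 \<and> tsize (fst x) + tsize (fst y) = n}"
      using Suc by (auto simp: positions_def)
    finally show ?thesis
      using Suc by (simp add: tree_gf_card_nth[OF fin fin_pos] tree_gf_mult_card_nth[OF fin fin_pos fin_pos])
  qed
qed

lemma sum_by_length:
  assumes "finite P" and "\<forall>p\<in>P. length p \<le> n"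
  shows "(\<Sum>p\<in>P. g (length p)) = (\<Sum>d=0..n. g d * real (card {p\<in>P. length p = d}))"
proof -
  have "(\<Sum>p\<in>P. g (length p)) = (\<Sum>d\<in>{0..n}. \<Sum>p\<in>{p\<in>P. length p = d}. g (length p))"
    by (rule sum.group[symmetric]) (use assms in auto)
  then show ?thesis
    by (simp add: mult.commute)
qed

lemma fps_mult_compose_nth:
  fixes G u :: "'a::comm_ring_1 fps"
  assumes "u $ 0 = 0"
  shows "(G * fps_compose (Abs_fps c) u) $ n = (\<Sum>d=0..n. c d * (G * u ^ d) $ n)"
proof -
  have high: "(u ^ d) $ m = 0" if "m < d" for m d
    using startsby_zero_power_prefix[OF assms] that by blast
  have "(G * fps_compose (Abs_fps c) u) $ n = (\<Sum>i=0..n. G $ i * (\<Sum>d=0..n-i. c d * (u ^ d) $ (n - i)))"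
    by (simp add: fps_mult_nth fps_compose_nth)
  also have "\<dots> = (\<Sum>i=0..n. \<Sum>d=0..n. c d * (G $ i * (u ^ d) $ (n - i)))"
  proof (rule sum.cong[OF refl])
    fix i
    have "(\<Sum>d=0..n-i. c d * (u ^ d) $ (n - i)) = (\<Sum>d=0..n. c d * (u ^ d) $ (n - i))"
      by (rule sum.mono_neutral_left) (auto simp: high)
    then show "G $ i * (\<Sum>d=0..n-i. c d * (u ^ d) $ (n - i)) = (\<Sum>d=0..n. c d * (G $ i * (u ^ d) $ (n - i)))"
      by (simp add: sum_distrib_left algebra_simps)
  qed
  also have "\<dots> = (\<Sum>d=0..n. c d * (G * u ^ d) $ n)"
    by (subst sum.swap) (simp add: fps_mult_nth sum_distrib_left)
  finally show ?thesis .
qed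

lemma tree_gf_sum_positions_nth:
  "tree_gf \<T> (\<lambda>T. \<Sum>p\<in>{p\<in>positions T. Q T p}. g (length p)) $ n
   = (\<Sum>d=0..n. g d * tree_gf \<T> (\<lambda>T. real (card {p\<in>positions T. Q T p \<and> length p = d})) $ n)"
proof -
  have "(\<Sum>p\<in>{p\<in>positions T. Q T p}. g (length p))
      = (\<Sum>d=0..n. g d * real (card {p\<in>positions T. Q T p \<and> length p = d}))"
    if "tsize T = n" for T
  proof -
    have "finite {p\<in>positions T. Q T p}"
      by (rule finite_subset[OF _ finite_positions]) auto
    moreover have "\<forall>p\<in>{p\<in>positions T. Q T p}. length p \<le> n"
      using length_less_tsize that by fastforce
    ultimately show ?thesis
      by (simp add: sum_by_length)
  qed
  then show ?thesis
    by (simp add: tree_gf_def sum_distrib_left flip: sum.swap[of _ "{0..n}"])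
qed

section \<open>Level generating functions\<close>

text \<open>In the notation of the proof idea, \<open>level_gf \<T> d = A\<^sub>d\<close>, \<open>leaf_level_gf \<T> d = B\<^sub>d\<close>
  and \<open>level_ratio \<T> = u\<close>.\<close>

definition level_gf :: "'a tree set \<Rightarrow> nat \<Rightarrow> real fps" where
  "level_gf \<T> d = tree_gf \<T> (\<lambda>T. real (card {p\<in>positions T. length p = d}))"

definition leaf_level_gf :: "'a tree set \<Rightarrow> nat \<Rightarrow> real fps" where
  "leaf_level_gf \<T> d =
     tree_gf \<T> (\<lambda>T. real (card {p\<in>positions T. length p = d \<and> subtree_at T p = Some (Node [])}))"

definition level_ratio :: "'a tree set \<Rightarrow> real fps" where
  "level_ratio \<T> = fps_shift 1 (leaf_level_gf \<T> 1)"

lemma leaf_level_gf_1: "leaf_level_gf \<T> 1 = fps_X * level_ratio \<T>"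
  by (rule fps_ext) (simp add: level_ratio_def leaf_level_gf_def tree_gf_nth_0)

lemma level_ratio_nth_0: "level_ratio \<T> $ 0 = 0"
proof -
  have no_leaves: "card {p\<in>positions T. length p = 1 \<and> subtree_at T p = Some (Node [])} = 0"
    if "T \<in> {T\<in>\<T>. tsize T = 1}" for T
  proof -
    have "{p\<in>positions T. length p = 1 \<and> subtree_at T p = Some (Node [])} = {}"
      using length_less_tsize[of _ T] that by fastforce
    then show ?thesis
      by (simp only: card.empty)
  qed
  have "leaf_level_gf \<T> 1 $ 1 = 0"
    unfolding leaf_level_gf_def tree_gf_def fps_nth_Abs_fps
    by (intro sum.neutral ballI) (simp only: no_leaves of_nat_0)
  then show ?thesis
    by (simp add: level_ratio_def)
qed

context
  fixes \<T> :: "'a tree set"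
  assumes graftable: "graftable \<T>" and fin: "\<And>n. finite {T\<in>\<T>. tsize T = n}"
    and leaf: "Node [] \<in> \<T>"
begin

lemma fps_X_mult_level_gf: "fps_X * level_gf \<T> d = leaf_level_gf \<T> d * tree_gf \<T> (\<lambda>_. 1)"
proof -
  have "{r\<in>positions R. d \<le> length r \<and> drop d r = []} = {p\<in>positions R. length p = d}" for R :: "'a tree"
    by auto
  moreover have "{q\<in>positions U. q = []} = {[]}" for U :: "'a tree"
    by (auto simp: positions_def)
  ultimately show ?thesis
    using tree_gf_graft_convolution[OF graftable fin, of d "\<lambda>U q. q = []"]
    by (simp add: level_gf_def leaf_level_gf_def)
qed

lemma fps_X_mult_leaf_level_gf_add:
  "fps_X * leaf_level_gf \<T> (d + e) = leaf_level_gf \<T> d * leaf_level_gf \<T> e"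
proof -
  have "{r\<in>positions R. d \<le> length r \<and> length (drop d r) = e
          \<and> subtree_at (the (subtree_at R (take d r))) (drop d r) = Some (Node [])}
     = {p\<in>positions R. length p = d + e \<and> subtree_at R p = Some (Node [])}" for R :: "'a tree"
  proof (intro set_eqI iffI)
    fix r
    assume r: "r \<in> {r\<in>positions R. d \<le> length r \<and> length (drop d r) = e
          \<and> subtree_at (the (subtree_at R (take d r))) (drop d r) = Some (Node [])}"
    then obtain V where "subtree_at R (take d r) = Some V"
      using subtree_at_take_drop by blast
    then show "r \<in> {p\<in>positions R. length p = d + e \<and> subtree_at R p = Some (Node [])}"
      using r subtree_at_append[of R "take d r" "drop d r"] by auto
  next
    fix r
    assume r: "r \<in> {p\<in>positions R. length p = d + e \<and> subtree_at R p = Some (Node [])}"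
    then obtain V where "subtree_at R (take d r) = Some V"
      using subtree_at_take_drop by blast
    then show "r \<in> {r\<in>positions R. d \<le> length r \<and> length (drop d r) = e
          \<and> subtree_at (the (subtree_at R (take d r))) (drop d r) = Some (Node [])}"
      using r subtree_at_append[of R "take d r" "drop d r"] by auto
  qed
  then show ?thesis
    using tree_gf_graft_convolution[OF graftable fin, of d
        "\<lambda>U q. length q = e \<and> subtree_at U q = Some (Node [])"]
    by (simp add: leaf_level_gf_def)
qed

lemma leaf_level_gf_0: "leaf_level_gf \<T> 0 = fps_X"
proof (rule fps_ext)
  fix n
  have "{p\<in>positions T. length p = 0 \<and> subtree_at T p = Some (Node [])}
      = (if T = Node [] then {[]} else {})" for T :: "'a tree"
    by (auto simp: positions_def)
  then have "real (card {p\<in>positions T. length p = 0 \<and> subtree_at T p = Some (Node [])})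
      = (if T = Node [] then 1 else 0)" for T :: "'a tree"
    by simp
  then have "leaf_level_gf \<T> 0 $ n = (\<Sum>T\<in>{T\<in>\<T>. tsize T = n}. if T = Node [] then 1 else 0)"
    unfolding leaf_level_gf_def tree_gf_def fps_nth_Abs_fps by presburger
  also have "\<dots> = fps_X $ n"
    using fin[of n] leaf by (simp add: tsize_leaf fps_X_def eq_commute)
  finally show "leaf_level_gf \<T> 0 $ n = fps_X $ n" .
qed

lemma leaf_level_gf_eq: "leaf_level_gf \<T> d = fps_X * level_ratio \<T> ^ d"
proof (induction d)
  case 0
  then show ?case
    by (simp add: leaf_level_gf_0)
next
  case (Suc d)
  have "fps_X * leaf_level_gf \<T> (Suc d) = leaf_level_gf \<T> 1 * leaf_level_gf \<T> d"
    using fps_X_mult_leaf_level_gf_add[of 1 d] by simp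
  also have "\<dots> = fps_X * (fps_X * level_ratio \<T> ^ Suc d)"
    unfolding leaf_level_gf_1 Suc.IH by (simp add: ac_simps)
  finally show ?case
    by simp
qed

lemma level_gf_eq: "level_gf \<T> d = tree_gf \<T> (\<lambda>_. 1) * level_ratio \<T> ^ d"
  using fps_X_mult_level_gf[of d] by (simp add: leaf_level_gf_eq algebra_simps)

lemma tree_gf_sum_positions:
  "tree_gf \<T> (\<lambda>T. \<Sum>p\<in>positions T. g (length p))
   = tree_gf \<T> (\<lambda>_. 1) * fps_compose (Abs_fps g) (level_ratio \<T>)"
proof (rule fps_ext)
  fix n
  show "tree_gf \<T> (\<lambda>T. \<Sum>p\<in>positions T. g (length p)) $ n
      = (tree_gf \<T> (\<lambda>_. 1) * fps_compose (Abs_fps g) (level_ratio \<T>)) $ n"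
    using tree_gf_sum_positions_nth[where Q = "\<lambda>_ _. True" and g = g]
    by (simp add: fps_mult_compose_nth level_ratio_nth_0 level_gf_eq[symmetric]
        level_gf_def)
qed

lemma tree_gf_nleaves:
  "tree_gf \<T> (\<lambda>T. real (nleaves T)) = fps_X * fps_compose (Abs_fps (\<lambda>_. 1)) (level_ratio \<T>)"
proof (rule fps_ext)
  fix n
  have "tree_gf \<T> (\<lambda>T. real (nleaves T)) $ n = (\<Sum>d=0..n. leaf_level_gf \<T> d $ n)"
    using tree_gf_sum_positions_nth[where Q = "\<lambda>T p. subtree_at T p = Some (Node [])" and g = "\<lambda>_. 1"]
    by (simp add: nleaves_eq_card leaf_level_gf_def conj_commute)
  also have "\<dots> = (fps_X * fps_compose (Abs_fps (\<lambda>_. 1)) (level_ratio \<T>)) $ n"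
    unfolding fps_mult_compose_nth[OF level_ratio_nth_0] leaf_level_gf_eq by simp
  finally show "tree_gf \<T> (\<lambda>T. real (nleaves T)) $ n
      = (fps_X * fps_compose (Abs_fps (\<lambda>_. 1)) (level_ratio \<T>)) $ n" .
qed

end

section \<open>The polynomials \<open>P\<^sub>k\<close>\<close>

declare Ppoly.simps [simp del]

definition rising_poly :: "nat \<Rightarrow> real poly" where
  "rising_poly k = (\<Prod>i<k. [:of_nat i, 1:])"

lemma binpoly_eq: "binpoly k = smult (1 / fact k) (rising_poly k)"
  unfolding binpoly_def rising_poly_def ..

lemma rising_poly_0: "rising_poly 0 = 1"
  by (simp add: rising_poly_def)

lemma rising_poly_Suc: "rising_poly (Suc k) = rising_poly k * [:of_nat k, 1:]"
  unfolding rising_poly_def by (simp add: mult.commute)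

lemma coeff_mult_monic_linear:
  "coeff (p * [:a, 1:]) n = a * coeff p n + (if n = 0 then 0 else coeff p (n - 1))"
  for p :: "'a::comm_semiring_1 poly"
proof -
  have "p * [:a, 1:] = smult a p + pCons 0 p"
    by simp
  then show ?thesis
    by (cases n) (simp_all add: coeff_pCons)
qed

lemma coeff_rising_poly_above: "k < n \<Longrightarrow> coeff (rising_poly k) n = 0"
  by (induction k arbitrary: n)
    (simp_all add: rising_poly_0 rising_poly_Suc coeff_mult_monic_linear del: mult_pCons_right)

lemma coeff_rising_poly_self: "coeff (rising_poly k) k = 1"
  by (induction k) (simp_all add: rising_poly_0 rising_poly_Suc coeff_mult_monic_linear
      coeff_rising_poly_above del: mult_pCons_right)

lemma poly_rising_poly: "poly (rising_poly k) x = pochhammer x k"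
  by (simp add: rising_poly_def pochhammer_prod poly_prod atLeast0LessThan add.commute)

lemma coeff_rising_poly_0: "k \<ge> 1 \<Longrightarrow> coeff (rising_poly k) 0 = 0"
  by (simp flip: poly_0_coeff_0 add: poly_rising_poly pochhammer_0_left)

text \<open>The coefficient of \<open>m\<^sup>k\<^sup>-\<^sup>1\<close> in \<open>m (m + 1) \<dots> (m + k - 1)\<close> is \<open>0 + 1 + \<dots> + (k - 1)\<close>.\<close>
lemma coeff_rising_poly_Suc_self: "coeff (rising_poly (Suc k)) k = real (Suc k) * real k / 2"
proof (induction k)
  case 0
  then show ?case
    by (simp add: rising_poly_0 rising_poly_Suc coeff_mult_monic_linear del: mult_pCons_right)
next
  case (Suc k)
  have "coeff (rising_poly (Suc (Suc k))) (Suc k) = real (Suc k) + coeff (rising_poly (Suc k)) k"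
    by (simp add: rising_poly_Suc[of "Suc k"] coeff_mult_monic_linear coeff_rising_poly_self
        del: mult_pCons_right)
  also have "\<dots> = real (Suc (Suc k)) * real (Suc k) / 2"
    using Suc by (simp add: field_simps)
  finally show ?case .
qed

lemma bcoef_eq: "bcoef k j = coeff (rising_poly k) j / fact k"
  unfolding bcoef_def binpoly_eq by simp

lemma poly_binpoly: "poly (binpoly k) x = pochhammer x k / fact k"
  by (simp add: binpoly_eq poly_rising_poly)

lemma poly_binpoly_eq_sum: "poly (binpoly k) x = (\<Sum>j=0..k. bcoef k j * x ^ j)"
proof -
  have "degree (binpoly k) \<le> k"
    by (rule degree_le) (simp add: binpoly_eq coeff_rising_poly_above)
  then have "poly (binpoly k) x = (\<Sum>j\<le>k. bcoef k j * x ^ j)"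
    unfolding poly_altdef bcoef_def
    by (intro sum.mono_neutral_left) (auto simp: coeff_eq_0)
  then show ?thesis
    by (simp add: atLeast0AtMost)
qed

lemma Ppoly_rec:
  "k \<ge> 1 \<Longrightarrow> Ppoly k = smult (fact k) (monom 1 k - (\<Sum>j\<in>{1..<k}. smult (bcoef k j) (Ppoly j)))"
  by (subst Ppoly.simps) (simp add: bcoef_eq coeff_rising_poly_self)

lemma coeff_Ppoly:
  "k \<ge> 1 \<Longrightarrow> coeff (Ppoly k) n
     = fact k * ((if n = k then 1 else 0) - (\<Sum>j\<in>{1..<k}. bcoef k j * coeff (Ppoly j) n))"
  by (subst Ppoly_rec) (simp_all add: coeff_sum)

lemma Ppoly_degree_lead_coeff:
  "k \<ge> 1 \<Longrightarrow> (\<forall>n>k. coeff (Ppoly k) n = 0) \<and> coeff (Ppoly k) k = fact k"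
proof (induction k rule: less_induct)
  case (less k)
  have "coeff (Ppoly j) n = 0" if "j \<in> {1..<k}" and "n \<ge> k" for j n
    using less.IH[of j] that by auto
  then have "(\<Sum>j\<in>{1..<k}. bcoef k j * coeff (Ppoly j) n) = 0" if "n \<ge> k" for n
    using that by (intro sum.neutral) auto
  then show ?case
    using coeff_Ppoly[OF less.prems] by simp
qed

lemma coeff_Ppoly_pred: "k \<ge> 1 \<Longrightarrow> coeff (Ppoly k) (k - 1) = - fact k * real (k - 1) / 2"
proof (cases "k = 1")
  case True
  then show ?thesis
    using coeff_Ppoly[of 1 0] by simp
next
  case False
  assume "k \<ge> 1"
  with False obtain m where k: "k = Suc (Suc m)"
    by (metis One_nat_def Suc_le_D le_SucE not_less_eq_eq)
  \<comment> \<open>Only \<open>j = k - 1\<close> contributes to the sum in \<open>coeff_Ppoly\<close>; the other \<open>P\<^sub>j\<close> have degree below \<open>k - 1\<close>.\<close>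
  have "(\<Sum>j\<in>{1..<k}. bcoef k j * coeff (Ppoly j) (k - 1)) = bcoef k (k - 1) * fact (k - 1)"
  proof -
    have "(\<Sum>j\<in>{1..<k}. bcoef k j * coeff (Ppoly j) (k - 1))
        = bcoef k (k - 1) * coeff (Ppoly (k - 1)) (k - 1)
          + (\<Sum>j\<in>{1..<k} - {k - 1}. bcoef k j * coeff (Ppoly j) (k - 1))"
      by (rule sum.remove) (auto simp: k)
    moreover have "(\<Sum>j\<in>{1..<k} - {k - 1}. bcoef k j * coeff (Ppoly j) (k - 1)) = 0"
      using Ppoly_degree_lead_coeff by (intro sum.neutral) auto
    ultimately show ?thesis
      using Ppoly_degree_lead_coeff[of "k - 1"] by (simp add: k)
  qed
  then have "coeff (Ppoly k) (k - 1) = - fact k * (bcoef k (k - 1) * fact (k - 1))"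
    using coeff_Ppoly[of k "k - 1"] by (simp add: k)
  also have "bcoef k (k - 1) * fact (k - 1) = real k * real (k - 1) / 2 / (real k * fact (k - 1)) * fact (k - 1)"
    using coeff_rising_poly_Suc_self[of "Suc m"] by (simp add: k bcoef_eq)
  also have "\<dots> = real (k - 1) / 2"
    by (simp add: k)
  finally show ?thesis
    by simp
qed

lemma Ppoly_leading_terms:
  assumes "k \<ge> 1"
  shows "\<exists>Q :: real poly.
           Ppoly k = monom (fact k) k - monom (fact k * real (k - 1) / 2) (k - 1) + Q
           \<and> (k \<ge> 2 \<longrightarrow> degree Q \<le> k - 2) \<and> (k = 1 \<longrightarrow> Q = 0)"
proof -
  define Q where "Q = Ppoly k - monom (fact k) k + monom (fact k * real (k - 1) / 2) (k - 1)"
  have "coeff Q i = 0" if "i \<ge> k - 1" for i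
  proof -
    have "i = k - 1 \<or> i = k \<or> i > k"
      using that assms by auto
    then show ?thesis
      using Ppoly_degree_lead_coeff[OF assms] coeff_Ppoly_pred[OF assms] assms
      by (auto simp: Q_def)
  qed
  then have "(k \<ge> 2 \<longrightarrow> degree Q \<le> k - 2) \<and> (k = 1 \<longrightarrow> Q = 0)"
    by (auto intro!: degree_le poly_eqI)
  moreover have "Ppoly k = monom (fact k) k - monom (fact k * real (k - 1) / 2) (k - 1) + Q"
    by (simp add: Q_def)
  ultimately show ?thesis
    by blast
qed

section \<open>Power sums of a power series\<close>

definition binom_series :: "nat \<Rightarrow> real fps" where
  "binom_series k = Abs_fps (\<lambda>d. poly (binpoly k) (real d))"

lemma fps_ones_mult_one_minus_X: "Abs_fps (\<lambda>_. 1 :: 'a::ring_1) * (1 - fps_X) = 1"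
  by (rule fps_ext) (simp add: algebra_simps)

lemma binom_series_0: "binom_series 0 = Abs_fps (\<lambda>_. 1)"
  by (simp add: binom_series_def poly_binpoly)

lemma binom_series_mult_one_minus_X:
  "binom_series (Suc k) * (1 - fps_X) = binom_series k - (if k = 0 then 1 else 0)"
proof (rule fps_ext)
  fix n
  have pascal: "pochhammer (x + 1) (Suc k) - pochhammer x (Suc k) = (real k + 1) * pochhammer (x + 1) k"
    for x :: real
    unfolding pochhammer_rec'[of "x + 1"] pochhammer_rec[of x] by (simp add: algebra_simps)
  show "(binom_series (Suc k) * (1 - fps_X)) $ n = (binom_series k - (if k = 0 then 1 else 0)) $ n"
  proof (cases n)
    case 0
    then show ?thesis
      by (simp add: algebra_simps binom_series_def poly_binpoly pochhammer_0_left)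
  next
    case (Suc m)
    have "(binom_series (Suc k) * (1 - fps_X)) $ n
        = (pochhammer (real m + 1) (Suc k) - pochhammer (real m) (Suc k)) / fact (Suc k)"
      using Suc by (simp add: algebra_simps binom_series_def poly_binpoly
          diff_divide_distrib)
    also have "\<dots> = pochhammer (real m + 1) k / fact k"
      unfolding pascal fact_Suc by (simp add: add.commute)
    finally show ?thesis
      using Suc by (simp add: binom_series_def poly_binpoly add.commute)
  qed
qed

lemma binom_series_mult_power: "k \<ge> 1 \<Longrightarrow> binom_series k * (1 - fps_X) ^ Suc k = fps_X"
proof (induction k rule: nat_induct_at_least)
  case base
  have "binom_series 1 * (1 - fps_X) ^ Suc 1 = (binom_series 0 - 1) * (1 - fps_X)"
    using binom_series_mult_one_minus_X[of 0] by (simp add: power2_eq_square mult.assoc[symmetric])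
  also have "\<dots> = fps_X"
    by (simp add: binom_series_0 left_diff_distrib fps_ones_mult_one_minus_X)
  finally show ?case .
next
  case (Suc k)
  have "binom_series (Suc k) * (1 - fps_X) ^ Suc (Suc k)
      = (binom_series (Suc k) * (1 - fps_X)) * (1 - fps_X) ^ Suc k"
    by (simp only: power_Suc mult.assoc)
  also have "\<dots> = fps_X"
    using Suc by (simp add: binom_series_mult_one_minus_X)
  finally show ?case .
qed

lemma fps_compose_Abs_fps_sum:
  "fps_compose (Abs_fps (\<lambda>d. \<Sum>j\<in>J. a j * c j d)) u
   = (\<Sum>j\<in>J. fps_const (a j) * fps_compose (Abs_fps (c j)) (u :: 'a::comm_ring_1 fps))"
proof (rule fps_ext)
  fix n
  have "fps_compose (Abs_fps (\<lambda>d. \<Sum>j\<in>J. a j * c j d)) u $ n = (\<Sum>i=0..n. \<Sum>j\<in>J. a j * c j i * (u ^ i) $ n)"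
    by (simp add: fps_compose_nth sum_distrib_right)
  also have "\<dots> = (\<Sum>j\<in>J. fps_const (a j) * fps_compose (Abs_fps (c j)) u) $ n"
    by (subst sum.swap) (simp add: fps_compose_nth fps_sum_nth sum_distrib_left mult.assoc)
  finally show "fps_compose (Abs_fps (\<lambda>d. \<Sum>j\<in>J. a j * c j d)) u $ n
      = (\<Sum>j\<in>J. fps_const (a j) * fps_compose (Abs_fps (c j)) u) $ n" .
qed

lemma map_poly_fps_const_add:
  "map_poly fps_const (p + q) = map_poly fps_const p + map_poly fps_const (q :: 'a::comm_ring_1 poly)"
  by (rule poly_eqI) (simp add: coeff_map_poly)

lemma map_poly_fps_const_diff:
  "map_poly fps_const (p - q) = map_poly fps_const p - map_poly fps_const (q :: 'a::comm_ring_1 poly)"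
  by (rule poly_eqI) (simp add: coeff_map_poly)

lemma map_poly_fps_const_sum:
  "map_poly fps_const (\<Sum>j\<in>J. f j) = (\<Sum>j\<in>J. map_poly fps_const (f j :: 'a::comm_ring_1 poly))"
  by (induction J rule: infinite_finite_induct) (simp_all add: map_poly_fps_const_add)

lemma poly_map_poly_fps_const_Ppoly:
  "k \<ge> 1 \<Longrightarrow> poly (map_poly fps_const (Ppoly k)) W
   = fps_const (fact k) * (W ^ k - (\<Sum>j\<in>{1..<k}. fps_const (bcoef k j) * poly (map_poly fps_const (Ppoly j)) W))"
  by (subst Ppoly_rec)
    (simp_all add: map_poly_smult map_poly_fps_const_diff map_poly_fps_const_sum
      map_poly_monom poly_sum poly_monom)

lemma fps_compose_ones_mult_one_minus:
  assumes "u $ 0 = 0"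
  shows "fps_compose (Abs_fps (\<lambda>_. 1)) u * (1 - u) = (1 :: 'a::idom fps)"
proof -
  have "fps_compose (Abs_fps (\<lambda>_. 1) * (1 - fps_X)) u = (1 :: 'a fps)"
    by (simp only: fps_ones_mult_one_minus_X fps_compose_1)
  then show ?thesis
    by (simp add: fps_compose_mult_distrib[OF assms] fps_compose_sub_distrib assms)
qed

context
  fixes u W :: "real fps"
  assumes u0: "u $ 0 = 0" and W_inverse: "W * (1 - u) = 1"
begin

lemma fps_compose_binom_series: "k \<ge> 1 \<Longrightarrow> fps_compose (binom_series k) u = u * W ^ Suc k"
proof -
  assume "k \<ge> 1"
  then have "fps_compose (binom_series k) u * (1 - u) ^ Suc k = u"
    using arg_cong[OF binom_series_mult_power, of k "\<lambda>f. fps_compose f u"] u0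
    by (simp add: fps_compose_mult_distrib[OF u0] fps_compose_sub_distrib
        flip: fps_compose_power[OF u0])
  then have "fps_compose (binom_series k) u * ((1 - u) * W) ^ Suc k = u * W ^ Suc k"
    by (simp only: power_mult_distrib mult.assoc[symmetric])
  then show ?thesis
    using W_inverse by (simp add: mult.commute)
qed

lemma fps_compose_powers_eq_Ppoly:
  "k \<ge> 1 \<Longrightarrow> fps_compose (Abs_fps (\<lambda>d. real d ^ k)) u = (W - 1) * poly (map_poly fps_const (Ppoly k)) W"
proof (induction k rule: less_induct)
  case (less k)
  let ?S = "\<lambda>j. fps_compose (Abs_fps (\<lambda>d. real d ^ j)) u"
  let ?E = "\<lambda>j. poly (map_poly fps_const (Ppoly j)) W"
  let ?rest = "\<Sum>j\<in>{1..<k}. fps_const (bcoef k j) * ?S j"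
  have IH: "(W - 1) * ?E j = ?S j" if "j \<in> {1..<k}" for j
    using less.IH[of j] that by simp
  have "{0..k} = insert 0 (insert k {1..<k})"
    using less.prems by auto
  then have "fps_compose (binom_series k) u = fps_const (bcoef k k) * ?S k + ?rest"
    unfolding binom_series_def poly_binpoly_eq_sum fps_compose_Abs_fps_sum
    using less.prems by (simp add: bcoef_eq coeff_rising_poly_0)
  moreover have "W - 1 = u * W"
    using W_inverse by (simp add: algebra_simps)
  ultimately have "(W - 1) * W ^ k = fps_const (bcoef k k) * ?S k + ?rest"
    using fps_compose_binom_series[OF less.prems] by (simp add: mult.assoc)
  moreover have "(W - 1) * (\<Sum>j\<in>{1..<k}. fps_const (bcoef k j) * ?E j) = ?rest"
    unfolding sum_distrib_left by (rule sum.cong) (simp_all add: IH mult.left_commute[of "W - 1"])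
  then have "(W - 1) * ?E k = fps_const (fact k) * ((W - 1) * W ^ k - ?rest)"
    unfolding poly_map_poly_fps_const_Ppoly[OF less.prems] by (simp only: right_diff_distrib ac_simps)
  ultimately show ?case
    by (simp add: bcoef_eq coeff_rising_poly_self fps_const_mult[symmetric])
qed

end

section \<open>Moments of the depth\<close>

lemma tree_gf_depth_power_sum:
  assumes "graftable \<T>" and fin: "\<And>n. finite {T\<in>\<T>. tsize T = n}" and leaf: "Node [] \<in> \<T>"
    and "k \<ge> 1"
  shows "tree_gf \<T> (\<lambda>T. real (sum_list (map (\<lambda>d. d ^ k) (depths T))))
           = (tree_gf \<T> (\<lambda>T. real (tsize T)) - tree_gf \<T> (\<lambda>_. 1))
             * poly (map_poly fps_const (Ppoly k)) (tree_gf \<T> (\<lambda>T. real (nleaves T)) / fps_X)"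
proof -
  define u where "u = level_ratio \<T>"
  define W where "W = fps_compose (Abs_fps (\<lambda>_. 1)) u"
  have u0: "u $ 0 = 0"
    by (simp add: u_def level_ratio_nth_0)
  have W_inverse: "W * (1 - u) = 1"
    unfolding W_def by (rule fps_compose_ones_mult_one_minus[OF u0])
  note gf_positions = tree_gf_sum_positions[OF assms(1) fin leaf, folded u_def]
  have D: "tree_gf \<T> (\<lambda>T. real (sum_list (map (\<lambda>d. d ^ k) (depths T))))
      = tree_gf \<T> (\<lambda>_. 1) * fps_compose (Abs_fps (\<lambda>d. real d ^ k)) u"
    using gf_positions[of "\<lambda>d. real d ^ k"] by (simp add: sum_list_map_depths)
  have V: "tree_gf \<T> (\<lambda>T. real (tsize T)) = tree_gf \<T> (\<lambda>_. 1) * W"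
    using gf_positions[of "\<lambda>_. 1"] by (simp add: W_def tsize_eq_card_positions)
  have L: "tree_gf \<T> (\<lambda>T. real (nleaves T)) / fps_X = W"
    unfolding tree_gf_nleaves[OF assms(1) fin leaf] fps_divide_X W_def u_def
    by (subst mult.commute) (rule fps_shift_times_fps_X')
  have "tree_gf \<T> (\<lambda>T. real (sum_list (map (\<lambda>d. d ^ k) (depths T))))
      = (tree_gf \<T> (\<lambda>_. 1) * W - tree_gf \<T> (\<lambda>_. 1)) * poly (map_poly fps_const (Ppoly k)) W"
    unfolding D fps_compose_powers_eq_Ppoly[OF u0 W_inverse assms(4)]
    by (simp only: left_diff_distrib right_diff_distrib mult.assoc mult_1_left)
  then show ?thesis
    by (simp only: V L)
qed

theorem theorem2p2:
  fixes \<T> :: "'a tree set" and k :: nat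
  assumes "graftable \<T>"
    and "\<forall>n. finite {T\<in>\<T>. tsize T = n}"
    and "\<exists>\<Phi> :: real fps. fps_nth \<Phi> 0 \<noteq> 0 \<and>
           tree_gf \<T> (\<lambda>_. 1) = fps_X * fps_compose \<Phi> (tree_gf \<T> (\<lambda>_. 1))"
    and "k \<ge> 1"
  shows "(tree_gf \<T> (\<lambda>T. real (sum_list (map (\<lambda>d. d ^ k) (depths T))))
           = (tree_gf \<T> (\<lambda>T. real (tsize T)) - tree_gf \<T> (\<lambda>_. 1))
             * poly (map_poly fps_const (Ppoly k)) (tree_gf \<T> (\<lambda>T. real (nleaves T)) / fps_X))
         \<and> (\<exists>Q :: real poly.
           Ppoly k = monom (fact k) k - monom (fact k * real (k - 1) / 2) (k - 1) + Q
           \<and> (k \<ge> 2 \<longrightarrow> degree Q \<le> k - 2) \<and> (k = 1 \<longrightarrow> Q = 0))"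
proof -
  have fin: "\<And>n. finite {T\<in>\<T>. tsize T = n}"
    using assms(2) by blast
  obtain \<Phi> :: "real fps" where "\<Phi> $ 0 \<noteq> 0"
    and "tree_gf \<T> (\<lambda>_. 1) = fps_X * fps_compose \<Phi> (tree_gf \<T> (\<lambda>_. 1))"
    using assms(3) by blast
  then have "Node [] \<in> \<T>"
    using leaf_in_graftable[OF assms(1)] nonempty_if_tree_gf_fixed_point by blast
  then show ?thesis
    using tree_gf_depth_power_sum[OF assms(1) fin _ assms(4)] Ppoly_leading_terms[OF assms(4)]
    by blast
qed

end
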